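(* Suppose $m$ satisfies (H1) and one of (H2a), (H2b), (H2c). Then: (i) if (H2a) holds and (Osg) holds, then $\beta\le1$, $\beta_1=0$ and $\beta_2=-1$; (ii) if (H2b) holds, then (Osg) fails; (iii) if (H2c) holds, then (Osg) holds.
   Context: $m:(0,\infty)\to\mathbb{R}$. (H1) (for some $n\in\mathbb{N}^\star$): $m\in C^{n+4}(\mathbb{R}_+)$; $m>0$, $m'\ge0$ on $(0,\infty)$; $\lim_{r\to0^+}rm'(r)$ exists; $|\frac{\mathrm d^k}{\mathrm dr^k}m'(r)|\le Cr^{-k}m'(r)$ for $k=1,\dots,n+3$, $r>0$. (H2a): with $\widetilde m(r)=m(e^r)$, there exist $\beta\in[0,+\infty]$, $\beta_1\in[0,\infty)$, $\beta_2\in(-2,\infty)$ with $\lim_{r\to\infty}m(r)=\infty$, $\lim\frac{r(\log r)\widetilde m'(r)}{\widetilde m(r)}=\beta$, $\lim\frac{r\widetilde m'(r)}{\widetilde m(r)}=\beta_1$, $\lim\frac{r\widetilde m''(r)}{\widetilde m'(r)}=\beta_2$ (limits as $r\to\infty$). (H2b): there is $\alpha\in(0,2)$ with $\lim_{r\to\infty}\frac{rm'(r)}{m(r)}=\alpha$. (H2c): there is $C>0$ with $\lim_{r\to\infty}m(r)=C<\infty$. (Osg): $\int_2^\infty\frac{\mathrm dr}{r(\log r)m(r)}=+\infty$. *)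

theory Defs
  imports "HOL-Analysis.Analysis"
begin

definition C_k_on :: "nat \<Rightarrow> real set \<Rightarrow> (real \<Rightarrow> real) \<Rightarrow> bool" where
  "C_k_on k S f \<longleftrightarrow>
     (\<forall>j<k. \<forall>x\<in>S. ((deriv ^^ j) f) differentiable (at x)) \<and>
     (\<forall>j\<le>k. continuous_on S ((deriv ^^ j) f))"

definition H1 :: "nat \<Rightarrow> (real \<Rightarrow> real) \<Rightarrow> bool" where
  "H1 n m \<longleftrightarrow>
     C_k_on (n + 4) {0<..} m \<and>
     (\<forall>r>0. m r > 0 \<and> deriv m r \<ge> 0) \<and>
     (\<exists>L. ((\<lambda>r. r * deriv m r) \<longlongrightarrow> L) (at_right 0)) \<and>
     (\<exists>C. \<forall>k\<in>{1..n+3}. \<forall>r>0.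
        \<bar>(deriv ^^ (k + 1)) m r\<bar> \<le> C * r powr (- real k) * deriv m r)"

definition mtilde :: "(real \<Rightarrow> real) \<Rightarrow> real \<Rightarrow> real" where
  "mtilde m r = m (exp r)"

definition H2a :: "(real \<Rightarrow> real) \<Rightarrow> ereal \<Rightarrow> real \<Rightarrow> real \<Rightarrow> bool" where
  "H2a m \<beta> \<beta>1 \<beta>2 \<longleftrightarrow>
     0 \<le> \<beta> \<and> 0 \<le> \<beta>1 \<and> -2 < \<beta>2 \<and>
     filterlim m at_top at_top \<and>
     ((\<lambda>r. ereal (r * ln r * deriv (mtilde m) r / mtilde m r)) \<longlongrightarrow> \<beta>) at_top \<and>
     ((\<lambda>r. r * deriv (mtilde m) r / mtilde m r) \<longlongrightarrow> \<beta>1) at_top \<and>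
     ((\<lambda>r. r * deriv (deriv (mtilde m)) r / deriv (mtilde m) r) \<longlongrightarrow> \<beta>2) at_top"

definition H2b :: "(real \<Rightarrow> real) \<Rightarrow> bool" where
  "H2b m \<longleftrightarrow> (\<exists>\<alpha>. 0 < \<alpha> \<and> \<alpha> < 2 \<and>
     ((\<lambda>r. r * deriv m r / m r) \<longlongrightarrow> \<alpha>) at_top)"

definition H2c :: "(real \<Rightarrow> real) \<Rightarrow> bool" where
  "H2c m \<longleftrightarrow> (\<exists>C>0. (m \<longlongrightarrow> C) at_top)"

definition Osg :: "(real \<Rightarrow> real) \<Rightarrow> bool" where
  "Osg m \<longleftrightarrow> (\<integral>\<^sup>+ r\<in>{2..}. ennreal (1 / (r * ln r * m r)) \<partial>lborel) = \<infinity>"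

end

(*
  Let Q(r) = ln r * ln (ln r) * r m'(r) / m(r). In the variable s = ln r this is the quantity
  whose limit is beta in (H2a), and under (H2b) it tends to infinity. If Q > c > 1 eventually,
  then 1/(r ln r m) is dominated by the derivative of -ln (ln r) / ((c - 1) m(r)), which is
  bounded above, so the Osgood integral converges; this gives (ii) and beta <= 1 in (i).
  Then s mtilde'/mtilde = Q(e^s) / ln s tends to 0, so beta1 = 0. If s mtilde''/mtilde' stayed
  below c < -1, then s mtilde' - (1 + c) mtilde would be nonincreasing and mtilde bounded; if it
  stayed above c > -1, the same function would be nondecreasing and s mtilde'/mtilde would stay
  near or above 1 + c > 0. Hence beta2 = -1. Under (H2c), m is bounded by its limit and
  1/(r ln r) is not integrable at infinity.
*)
theory Submission
  imports Defs "HOL-Real_Asymp.Real_Asymp"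
begin

lemma C_k_on_differentiable:
  "C_k_on k S f \<Longrightarrow> j < k \<Longrightarrow> x \<in> S \<Longrightarrow> (deriv ^^ j) f differentiable (at x)"
  unfolding C_k_on_def by blast

lemma C_k_on_continuous_on:
  "C_k_on k S f \<Longrightarrow> j \<le> k \<Longrightarrow> continuous_on S ((deriv ^^ j) f)"
  unfolding C_k_on_def by blast

lemma H1D:
  assumes "H1 n m" and "0 < x"
  shows H1_pos: "0 < m x"
    and H1_deriv_nonneg: "0 \<le> deriv m x"
    and H1_has_derivative: "(m has_real_derivative deriv m x) (at x)"
    and H1_deriv_has_derivative: "(deriv m has_real_derivative deriv (deriv m) x) (at x)"
proof -
  have Ck: "C_k_on (n + 4) {0<..} m"
    using assms(1) unfolding H1_def by blast
  show "0 < m x" "0 \<le> deriv m x"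
    using assms unfolding H1_def by auto
  show "(m has_real_derivative deriv m x) (at x)"
    using C_k_on_differentiable[OF Ck, of 0] assms(2)
    by (simp add: DERIV_deriv_iff_real_differentiable)
  show "(deriv m has_real_derivative deriv (deriv m) x) (at x)"
    using C_k_on_differentiable[OF Ck, of 1] assms(2)
    by (simp add: DERIV_deriv_iff_real_differentiable)
qed

lemma H1_continuous_on_deriv: "H1 n m \<Longrightarrow> continuous_on {0<..} (deriv m)"
  using C_k_on_continuous_on[of "n + 4" _ m 1] unfolding H1_def by simp

lemma H1_continuous_on:
  assumes "H1 n m"
  shows "continuous_on {0<..} m"
  by (intro continuous_at_imp_continuous_on ballI DERIV_isCont[OF H1_has_derivative[OF assms]]) auto

lemma H1_mono:
  assumes "H1 n m" and "0 < x" and "x \<le> y"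
  shows "m x \<le> m y"
  using assms by (intro DERIV_nonneg_imp_nondecreasing[OF \<open>x \<le> y\<close>])
    (meson H1_deriv_nonneg H1_has_derivative less_le_trans)

lemma H1_has_derivative_mtilde:
  "H1 n m \<Longrightarrow> (mtilde m has_real_derivative deriv m (exp s) * exp s) (at s)"
  unfolding mtilde_def[abs_def]
  by (rule DERIV_chain2[OF H1_has_derivative DERIV_exp]) auto

lemma H1_deriv_mtilde: "H1 n m \<Longrightarrow> deriv (mtilde m) s = deriv m (exp s) * exp s"
  by (rule DERIV_imp_deriv[OF H1_has_derivative_mtilde])

lemma H1_deriv_mtilde_has_derivative:
  assumes "H1 n m"
  shows "(deriv (mtilde m) has_real_derivative deriv (deriv (mtilde m)) s) (at s)"
proof -
  have "((\<lambda>s. deriv m (exp s) * exp s) has_real_derivative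
      deriv (deriv m) (exp s) * exp s * exp s + deriv m (exp s) * exp s) (at s)"
    by (auto intro!: derivative_eq_intros DERIV_chain2[OF H1_deriv_has_derivative[OF assms]])
  then show ?thesis
    unfolding H1_deriv_mtilde[OF assms, abs_def] using DERIV_imp_deriv by metis
qed

lemma H1_deriv_mtilde_ln: "H1 n m \<Longrightarrow> 0 < r \<Longrightarrow> deriv (mtilde m) (ln r) = r * deriv m r"
  by (simp add: H1_deriv_mtilde)

lemma nn_integral_inverse_x_ln_x_eq_infinity:
  "(\<integral>\<^sup>+x\<in>{2..}. ennreal (1 / (x * ln x)) \<partial>lborel) = \<infinity>"
proof -
  let ?I = "\<integral>\<^sup>+x\<in>{2..}. ennreal (1 / (x * ln x)) \<partial>lborel"
  have lower: "ennreal (ln (ln b) - ln (ln 2)) \<le> ?I" if "2 \<le> b" for b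
  proof -
    have "(\<integral>\<^sup>+x. ennreal (1 / (x * ln x)) * indicator {2..b} x \<partial>lborel) = ln (ln b) - ln (ln 2)"
    proof (rule nn_integral_FTC_Icc)
      fix x :: real assume "x \<in> {2..b}"
      then have "1 < x" by auto
      then show "0 \<le> 1 / (x * ln x)" by simp
      show "((\<lambda>x. ln (ln x)) has_real_derivative 1 / (x * ln x)) (at x)"
        using \<open>1 < x\<close> by (auto intro!: derivative_eq_intros simp: field_simps)
    qed (use that in auto)
    moreover have "(\<integral>\<^sup>+x. ennreal (1 / (x * ln x)) * indicator {2..b} x \<partial>lborel) \<le> ?I"
      by (intro nn_integral_mono) (auto split: split_indicator)
    ultimately show ?thesis by simp
  qed
  have "((\<lambda>b. ennreal (ln (ln b) - ln (ln 2))) \<longlongrightarrow> \<infinity>) at_top"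
    unfolding infinity_ennreal_def ennreal_tendsto_top_eq_at_top by real_asymp
  then have "\<infinity> \<le> ?I"
    by (rule tendsto_upperbound) (auto intro: eventually_mono[OF eventually_ge_at_top] lower)
  then show ?thesis
    by (simp add: top_unique)
qed

lemma Osg_if_bounded:
  assumes pos: "\<And>r. 2 \<le> r \<Longrightarrow> 0 < m r" and bound: "\<And>r. 2 \<le> r \<Longrightarrow> m r \<le> C"
  shows "Osg m"
proof -
  have "0 < C" using pos[of 2] bound[of 2] by simp
  have "ennreal (1 / C) * (\<integral>\<^sup>+x\<in>{2..}. ennreal (1 / (x * ln x)) \<partial>lborel)
      = (\<integral>\<^sup>+x\<in>{2..}. ennreal (1 / (C * (x * ln x))) \<partial>lborel)"
    using \<open>0 < C\<close>
    by (subst nn_integral_cmult[symmetric])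
      (auto intro!: nn_integral_cong simp: ennreal_mult[symmetric] split: split_indicator)
  also have "\<dots> \<le> (\<integral>\<^sup>+x\<in>{2..}. ennreal (1 / (x * ln x * m x)) \<partial>lborel)"
  proof (intro nn_integral_mono)
    fix x :: real
    show "ennreal (1 / (C * (x * ln x))) * indicator {2..} x
        \<le> ennreal (1 / (x * ln x * m x)) * indicator {2..} x"
    proof (cases "2 \<le> x")
      case True
      then have "0 < x * ln x" by simp
      with True pos[of x] bound[of x] show ?thesis
        by (auto intro!: ennreal_leI divide_left_mono simp: mult.commute)
    qed simp
  qed
  finally show ?thesis
    using \<open>0 < C\<close> unfolding Osg_def nn_integral_inverse_x_ln_x_eq_infinity
    by (simp add: ennreal_mult_top top_unique)
qed

lemma nn_integral_atLeast_finite_if_bounded_antiderivative: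
  fixes G g :: "real \<Rightarrow> real"
  assumes deriv: "\<And>x. a \<le> x \<Longrightarrow> (G has_real_derivative g x) (at x)"
    and cont: "continuous_on {a..} g"
    and nonneg: "\<And>x. a \<le> x \<Longrightarrow> 0 \<le> g x"
    and bound: "\<And>x. a \<le> x \<Longrightarrow> G x \<le> B"
  shows "(\<integral>\<^sup>+x\<in>{a..}. ennreal (g x) \<partial>lborel) < \<infinity>"
proof -
  define T where "T = (SUP x\<in>{a..}. G x)"
  have bdd: "bdd_above (G ` {a..})"
    by (rule bdd_aboveI2[where M = B]) (simp add: bound)
  have mono: "G x \<le> G y" if "a \<le> x" "x \<le> y" for x y
    using that deriv nonneg by (intro DERIV_nonneg_imp_nondecreasing[OF \<open>x \<le> y\<close>]) (meson order_trans)
  have "(G \<longlongrightarrow> T) at_top"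
  proof (rule increasing_tendsto)
    show "eventually (\<lambda>x. G x \<le> T) at_top"
      unfolding T_def using bdd
      by (intro eventually_mono[OF eventually_ge_at_top[of a]] cSUP_upper) auto
  next
    fix y assume "y < T"
    then obtain x where "a \<le> x" "y < G x"
      unfolding T_def using less_cSUP_iff[OF _ bdd] by auto
    then show "eventually (\<lambda>z. y < G z) at_top"
      using mono by (intro eventually_mono[OF eventually_ge_at_top[of x]]) (auto intro: less_le_trans)
  qed
  \<comment> \<open>the FTC on a half-line wants a globally measurable integrand\<close>
  moreover have "continuous_on UNIV (\<lambda>x. g (max a x))"
    by (rule continuous_on_compose2[OF cont]) (auto intro!: continuous_intros)
  ultimately have "(\<integral>\<^sup>+x. ennreal (g (max a x)) * indicator {a..} x \<partial>lborel) = T - G a"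
    using deriv nonneg
    by (intro nn_integral_FTC_atLeast borel_measurable_continuous_onI) (auto simp: max_def)
  moreover have "(\<integral>\<^sup>+x. ennreal (g (max a x)) * indicator {a..} x \<partial>lborel)
      = (\<integral>\<^sup>+x\<in>{a..}. ennreal (g x) \<partial>lborel)"
    by (intro nn_integral_cong) (auto simp: max_def split: split_indicator)
  ultimately show ?thesis
    by simp
qed

lemma not_Osg_if_majorant:
  fixes m g :: "real \<Rightarrow> real"
  assumes pos: "\<And>x. 2 \<le> x \<Longrightarrow> 0 < m x"
    and mono: "\<And>x y. 2 \<le> x \<Longrightarrow> x \<le> y \<Longrightarrow> m x \<le> m y"
    and "2 \<le> R"
    and majorant: "\<And>x. R \<le> x \<Longrightarrow> 1 / (x * ln x * m x) \<le> g x"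
    and cont: "continuous_on {R..} g"
    and finite: "(\<integral>\<^sup>+x\<in>{R..}. ennreal (g x) \<partial>lborel) < \<infinity>"
  shows "\<not> Osg m"
proof -
  define M where "M = 1 / (2 * ln 2 * m 2)"
  have bounded: "1 / (x * ln x * m x) \<le> M" if "2 \<le> x" for x
    unfolding M_def using that pos[of 2] mono[of 2 x]
    by (intro divide_left_mono mult_mono) auto
  have "(\<integral>\<^sup>+x\<in>{2..}. ennreal (1 / (x * ln x * m x)) \<partial>lborel)
      \<le> (\<integral>\<^sup>+x. ennreal M * indicator {2..R} x + ennreal (g x) * indicator {R..} x \<partial>lborel)"
  proof (intro nn_integral_mono)
    fix x :: real
    consider "x < 2" | "2 \<le> x" "x \<le> R" | "R < x" by linarith
    then show "ennreal (1 / (x * ln x * m x)) * indicator {2..} x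
        \<le> ennreal M * indicator {2..R} x + ennreal (g x) * indicator {R..} x"
    proof cases
      case 2
      then show ?thesis
        by (simp add: add_increasing2 bounded ennreal_leI)
    qed (use \<open>2 \<le> R\<close> majorant in \<open>auto intro: ennreal_leI\<close>)
  qed
  also have "\<dots> = ennreal M * ennreal (R - 2) + (\<integral>\<^sup>+x\<in>{R..}. ennreal (g x) \<partial>lborel)"
  proof (subst nn_integral_add)
    have "(\<lambda>x. ennreal (indicator {R..} x *\<^sub>R g x)) \<in> borel_measurable lborel"
      using measurable_compose[OF borel_measurable_continuous_on_indicator[OF _ cont] measurable_ennreal]
      by simp
    also have "(\<lambda>x. ennreal (indicator {R..} x *\<^sub>R g x)) = (\<lambda>x. ennreal (g x) * indicator {R..} x)"
      by (auto split: split_indicator)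
    finally show "(\<lambda>x. ennreal (g x) * indicator {R..} x) \<in> borel_measurable lborel" .
  qed (use \<open>2 \<le> R\<close> in \<open>auto simp: nn_integral_cmult_indicator\<close>)
  also have "\<dots> < \<infinity>"
    using finite by (simp add: ennreal_mult_less_top)
  finally show ?thesis
    unfolding Osg_def by simp
qed

lemma has_real_derivative_neg_ln_ln_div:
  assumes "(m has_real_derivative m') (at r)" and "1 < r" and "0 < m r" and "\<epsilon> \<noteq> 0"
  shows "((\<lambda>r. - ln (ln r) / (\<epsilon> * m r)) has_real_derivative
      (ln r * ln (ln r) * (r * m' / m r) - 1) / (\<epsilon> * (r * ln r * m r))) (at r)"
  using assms
  by (auto intro!: derivative_eq_intros simp: field_simps power2_eq_square)

lemma not_Osg_if_log_elasticity_gt_one: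
  assumes H1: "H1 n m" and "1 < c"
    and "eventually (\<lambda>r. c < ln r * ln (ln r) * (r * deriv m r / m r)) at_top"
  shows "\<not> Osg m"
proof -
  define Q where "Q r = ln r * ln (ln r) * (r * deriv m r / m r)" for r
  obtain R0 where R0: "\<And>r. R0 \<le> r \<Longrightarrow> c < Q r"
    using assms(3) unfolding eventually_at_top_linorder Q_def by blast
  have "2 \<le> exp (1::real)"
    using exp_ge_add_one_self[of 1] by simp
  define R where "R = max R0 (exp 1)"
  have "2 \<le> R"
    unfolding R_def using \<open>2 \<le> exp 1\<close> by linarith
  have R_pos: "1 < r" "0 \<le> ln (ln r)" "0 < m r" if "R \<le> r" for r
  proof -
    have "exp 1 \<le> r" "1 < r"
      using that \<open>2 \<le> R\<close> unfolding R_def by auto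
    then show "1 < r" "0 \<le> ln (ln r)" "0 < m r"
      using H1_pos[OF H1] by (auto simp: ln_ge_iff)
  qed
  define g where "g r = (Q r - 1) / ((c - 1) * (r * ln r * m r))" for r
  have majorant: "1 / (r * ln r * m r) \<le> g r" if "R \<le> r" for r
  proof -
    have "0 < (c - 1) * (r * ln r * m r)"
      using R_pos[OF that] \<open>1 < c\<close> by simp
    moreover have "c - 1 \<le> Q r - 1"
      using R0[of r] that unfolding R_def by simp
    ultimately have "(c - 1) / ((c - 1) * (r * ln r * m r)) \<le> g r"
      unfolding g_def by (intro divide_right_mono) auto
    then show ?thesis
      using \<open>1 < c\<close> by simp
  qed
  have cont: "continuous_on {R..} g"
  proof -
    have "{R..} \<subseteq> {0<..}"
      using \<open>2 \<le> R\<close> by auto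
    then show ?thesis
      unfolding g_def Q_def using \<open>1 < c\<close>
      by (intro continuous_intros continuous_on_subset[OF H1_continuous_on_deriv[OF H1]]
          continuous_on_subset[OF H1_continuous_on[OF H1]]) (auto dest: R_pos)
  qed
  have "(\<integral>\<^sup>+x\<in>{R..}. ennreal (g x) \<partial>lborel) < \<infinity>"
  proof (rule nn_integral_atLeast_finite_if_bounded_antiderivative[OF _ cont])
    fix r assume "R \<le> r"
    note pos = R_pos[OF this]
    show "((\<lambda>r. - ln (ln r) / ((c - 1) * m r)) has_real_derivative g r) (at r)"
      unfolding g_def Q_def using pos \<open>1 < c\<close>
      by (intro has_real_derivative_neg_ln_ln_div H1_has_derivative[OF H1]) auto
    show "0 \<le> g r"
      using majorant[OF \<open>R \<le> r\<close>] pos by (auto intro: order_trans[rotated])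
    show "- ln (ln r) / ((c - 1) * m r) \<le> 0"
      using pos \<open>1 < c\<close> by (auto intro!: divide_nonpos_pos)
  qed
  then show ?thesis
    using H1_pos[OF H1] H1_mono[OF H1] by (intro not_Osg_if_majorant[OF _ _ \<open>2 \<le> R\<close> majorant cont]) auto
qed

lemma nondecreasing_if_deriv_elasticity_ge:
  fixes M P P' :: "real \<Rightarrow> real"
  assumes dM: "\<And>s. S \<le> s \<Longrightarrow> (M has_real_derivative P s) (at s)"
    and dP: "\<And>s. S \<le> s \<Longrightarrow> (P has_real_derivative P' s) (at s)"
    and elasticity: "\<And>s. S \<le> s \<Longrightarrow> (k - 1) * P s \<le> s * P' s"
    and "S \<le> s" "s \<le> t"
  shows "s * P s - k * M s \<le> t * P t - k * M t"
proof (rule DERIV_nonneg_imp_nondecreasing[OF \<open>s \<le> t\<close>])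
  fix x assume "s \<le> x"
  then have "S \<le> x"
    using \<open>S \<le> s\<close> by simp
  have "((\<lambda>x. x * P x - k * M x) has_real_derivative P x + x * P' x - k * P x) (at x)"
    by (auto intro!: derivative_eq_intros dM dP \<open>S \<le> x\<close>)
  moreover have "0 \<le> P x + x * P' x - k * P x"
    using elasticity[OF \<open>S \<le> x\<close>] by (simp add: algebra_simps)
  ultimately show "\<exists>y. ((\<lambda>x. x * P x - k * M x) has_real_derivative y) (at x) \<and> 0 \<le> y"
    by blast
qed

context
  fixes M P P' :: "real \<Rightarrow> real" and b :: real
  assumes dM: "\<And>s. (M has_real_derivative P s) (at s)"
    and dP: "\<And>s. (P has_real_derivative P' s) (at s)"
    and P_nonneg: "\<And>s. 0 \<le> P s"
    and M_at_top: "filterlim M at_top at_top"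
    and elasticity_lim: "((\<lambda>s. s * P' s / P s) \<longlongrightarrow> b) at_top"
begin

text \<open>Where P vanishes the quotient s P'/P is 0 by the convention x / 0 = 0; the
  comparison with c P survives because P' vanishes there as well.\<close>

lemma derivative_eq_0_if_eq_0: "P s = 0 \<Longrightarrow> P' s = 0"
  using P_nonneg by (intro DERIV_local_min[OF dP zero_less_one]) (auto simp: dist_real_def)

lemma eventually_deriv_elasticity_le:
  assumes "b < c"
  shows "eventually (\<lambda>s. s * P' s \<le> c * P s) at_top"
  using order_tendstoD(2)[OF elasticity_lim assms]
proof eventually_elim
  case (elim s)
  with P_nonneg[of s] derivative_eq_0_if_eq_0[of s] show ?case
    by (cases "P s = 0") (simp_all add: divide_less_eq)
qed

lemma eventually_deriv_elasticity_ge: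
  assumes "c < b"
  shows "eventually (\<lambda>s. c * P s \<le> s * P' s) at_top"
  using order_tendstoD(1)[OF elasticity_lim assms]
proof eventually_elim
  case (elim s)
  with P_nonneg[of s] derivative_eq_0_if_eq_0[of s] show ?case
    by (cases "P s = 0") (simp_all add: less_divide_eq)
qed

lemma deriv_elasticity_limit_ge_minus_one: "-1 \<le> b"
proof (rule ccontr)
  assume "\<not> -1 \<le> b"
  define c where "c = (b - 1) / 2"
  have "b < c" "c < -1"
    using \<open>\<not> -1 \<le> b\<close> unfolding c_def by auto
  have "eventually (\<lambda>s. 0 < s \<and> s * P' s \<le> c * P s) at_top"
    using eventually_gt_at_top eventually_deriv_elasticity_le[OF \<open>b < c\<close>] by (rule eventually_conj)
  then obtain S where S: "\<And>s. S \<le> s \<Longrightarrow> 0 < s \<and> s * P' s \<le> c * P s"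
    unfolding eventually_at_top_linorder by blast
  define k where "k = 1 + c"
  have bounded: "M t \<le> (k * M S - S * P S) / k" if "S \<le> t" for t
  proof -
    have "s * - P s - k * - M s \<le> t * - P t - k * - M t" if "S \<le> s" "s \<le> t" for s
      using that S unfolding k_def
      by (intro nondecreasing_if_deriv_elasticity_ge[of S "\<lambda>s. - M s" "\<lambda>s. - P s" "\<lambda>s. - P' s"])
        (auto intro!: derivative_eq_intros dM dP)
    from this[of S] have "k * M S - S * P S \<le> k * M t - t * P t"
      using \<open>S \<le> t\<close> by simp
    moreover have "0 \<le> t * P t"
      using S[OF \<open>S \<le> t\<close>] P_nonneg[of t] by simp
    moreover have "k < 0"
      using \<open>c < -1\<close> unfolding k_def by simp
    ultimately show ?thesis
      by (simp add: pos_le_divide_eq neg_le_divide_eq algebra_simps)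
  qed
  have "eventually (\<lambda>t. (k * M S - S * P S) / k < M t \<and> S \<le> t) at_top"
    using M_at_top by (intro eventually_conj eventually_ge_at_top) (simp add: filterlim_at_top_dense)
  then obtain t where "(k * M S - S * P S) / k < M t" "S \<le> t"
    by (auto simp: eventually_at_top_linorder)
  with bounded show False
    by fastforce
qed

lemma deriv_elasticity_limit_le_minus_one:
  assumes "((\<lambda>s. s * P s / M s) \<longlongrightarrow> 0) at_top"
  shows "b \<le> -1"
proof (rule ccontr)
  assume "\<not> b \<le> -1"
  define c where "c = (b - 1) / 2"
  have "c < b" "-1 < c"
    using \<open>\<not> b \<le> -1\<close> unfolding c_def by auto
  from eventually_deriv_elasticity_ge[OF \<open>c < b\<close>]
  obtain S where S: "\<And>s. S \<le> s \<Longrightarrow> c * P s \<le> s * P' s"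
    unfolding eventually_at_top_linorder by blast
  define k where "k = 1 + c"
  have "0 < k"
    using \<open>-1 < c\<close> unfolding k_def by simp
  define H where "H = S * P S - k * M S"
  have lower: "k + H / M t \<le> t * P t / M t" if "S \<le> t" "0 < M t" for t
  proof -
    have "H \<le> t * P t - k * M t"
      unfolding H_def using that S unfolding k_def
      by (intro nondecreasing_if_deriv_elasticity_ge[of S M P P']) (auto intro: dM dP)
    with \<open>0 < M t\<close> have "(H + k * M t) / M t \<le> t * P t / M t"
      by (intro divide_right_mono) auto
    moreover have "(H + k * M t) / M t = k + H / M t"
      using \<open>0 < M t\<close> by (simp add: field_simps)
    ultimately show ?thesis
      by simp
  qed
  have "eventually (\<lambda>t. S \<le> t \<and> 0 < M t) at_top"
    using M_at_top by (intro eventually_conj eventually_ge_at_top) (simp add: filterlim_at_top_dense)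
  then have "eventually (\<lambda>t. k + H / M t \<le> t * P t / M t) at_top"
    by (rule eventually_mono) (simp add: lower)
  moreover have "((\<lambda>t. k + H / M t) \<longlongrightarrow> k) at_top"
    using tendsto_add[OF tendsto_const tendsto_divide_0[OF tendsto_const
        filterlim_at_top_imp_at_infinity[OF M_at_top]]] by simp
  ultimately have "k \<le> 0"
    using assms by (intro tendsto_le[of at_top]) auto
  with \<open>0 < k\<close> show False
    by simp
qed

end

lemma H2a_Osg_imp_beta_le_one:
  assumes H1: "H1 n m" and H2a: "H2a m \<beta> \<beta>1 \<beta>2" and "Osg m"
  shows "\<beta> \<le> 1"
proof (rule ccontr)
  assume "\<not> \<beta> \<le> 1"
  then have "1 < \<beta>"
    by simp
  then obtain c where "1 < ereal c" "ereal c < \<beta>"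
    using ereal_dense2 by blast
  with H2a have "eventually (\<lambda>s. c < s * ln s * deriv (mtilde m) s / mtilde m s) at_top"
    unfolding H2a_def by (auto dest: order_tendstoD(1))
  then have "eventually (\<lambda>r. c < ln r * ln (ln r) * deriv (mtilde m) (ln r) / mtilde m (ln r)) at_top"
    using ln_at_top unfolding filterlim_iff by blast
  then have "eventually (\<lambda>r. c < ln r * ln (ln r) * (r * deriv m r / m r)) at_top"
    using eventually_gt_at_top[of 0]
    by eventually_elim (simp add: H1_deriv_mtilde_ln[OF H1] mtilde_def)
  with \<open>1 < ereal c\<close> \<open>Osg m\<close> show False
    using not_Osg_if_log_elasticity_gt_one[OF H1] by simp
qed

lemma H2a_beta1_eq_0:
  assumes H2a: "H2a m \<beta> \<beta>1 \<beta>2" and "\<beta> \<noteq> \<infinity>"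
  shows "\<beta>1 = 0"
proof -
  obtain b where "\<beta> = ereal b"
    using H2a \<open>\<beta> \<noteq> \<infinity>\<close> unfolding H2a_def by (cases \<beta>) auto
  with H2a have "((\<lambda>s. s * ln s * deriv (mtilde m) s / mtilde m s) \<longlongrightarrow> b) at_top"
    unfolding H2a_def by simp
  then have "((\<lambda>s. (s * ln s * deriv (mtilde m) s / mtilde m s) / ln s) \<longlongrightarrow> 0) at_top"
    by (rule tendsto_divide_0[OF _ filterlim_at_top_imp_at_infinity[OF ln_at_top]])
  then have "((\<lambda>s. s * deriv (mtilde m) s / mtilde m s) \<longlongrightarrow> 0) at_top"
    by (rule Lim_transform_eventually) (auto intro: eventually_mono[OF eventually_gt_at_top[of 1]])
  with H2a show ?thesis
    unfolding H2a_def using tendsto_unique trivial_limit_at_top_linorder by blast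
qed

lemma H2a_beta2_eq_minus_one:
  assumes H1: "H1 n m" and H2a: "H2a m \<beta> \<beta>1 \<beta>2" and "\<beta>1 = 0"
  shows "\<beta>2 = -1"
proof (rule antisym)
  have dM: "(mtilde m has_real_derivative deriv (mtilde m) s) (at s)" for s
    using H1_has_derivative_mtilde[OF H1] by (simp add: H1_deriv_mtilde[OF H1])
  have P_nonneg: "0 \<le> deriv (mtilde m) s" for s
    by (simp add: H1_deriv_mtilde[OF H1] H1_deriv_nonneg[OF H1])
  have M_at_top: "filterlim (mtilde m) at_top at_top"
    using H2a unfolding H2a_def mtilde_def[abs_def] by (auto intro: filterlim_compose[OF _ exp_at_top])
  note mtilde_hyps = dM H1_deriv_mtilde_has_derivative[OF H1] P_nonneg M_at_top
  show "-1 \<le> \<beta>2"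
    using H2a unfolding H2a_def by (intro deriv_elasticity_limit_ge_minus_one[OF mtilde_hyps]) auto
  show "\<beta>2 \<le> -1"
    using H2a \<open>\<beta>1 = 0\<close> unfolding H2a_def by (intro deriv_elasticity_limit_le_minus_one[OF mtilde_hyps]) auto
qed

lemma H2b_imp_not_Osg:
  assumes H1: "H1 n m" and "H2b m"
  shows "\<not> Osg m"
proof -
  obtain \<alpha> where "0 < \<alpha>" and \<alpha>: "((\<lambda>r. r * deriv m r / m r) \<longlongrightarrow> \<alpha>) at_top"
    using \<open>H2b m\<close> unfolding H2b_def by blast
  have "filterlim (\<lambda>r::real. ln r * ln (ln r)) at_top at_top"
    by real_asymp
  from filterlim_tendsto_pos_mult_at_top[OF \<alpha> \<open>0 < \<alpha>\<close> this]
  have "filterlim (\<lambda>r. ln r * ln (ln r) * (r * deriv m r / m r)) at_top at_top"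
    by (simp add: ac_simps)
  then have "eventually (\<lambda>r. 2 < ln r * ln (ln r) * (r * deriv m r / m r)) at_top"
    by (simp add: filterlim_at_top_dense)
  then show ?thesis
    by (intro not_Osg_if_log_elasticity_gt_one[OF H1, where c = 2]) auto
qed

lemma H2c_imp_Osg:
  assumes H1: "H1 n m" and "H2c m"
  shows "Osg m"
proof -
  obtain C where lim: "(m \<longlongrightarrow> C) at_top"
    using \<open>H2c m\<close> unfolding H2c_def by blast
  show ?thesis
  proof (rule Osg_if_bounded)
    fix r :: real assume "2 \<le> r"
    then show "0 < m r"
      using H1_pos[OF H1] by simp
    show "m r \<le> C"
      using \<open>2 \<le> r\<close> H1_mono[OF H1]
      by (intro tendsto_lowerbound[OF lim] eventually_mono[OF eventually_ge_at_top[of r]]) auto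
  qed
qed

theorem lemma2p1:
  fixes m :: "real \<Rightarrow> real" and n :: nat
  assumes "n \<ge> 1"
    and "H1 n m"
    and "(\<exists>\<beta> \<beta>1 \<beta>2. H2a m \<beta> \<beta>1 \<beta>2) \<or> H2b m \<or> H2c m"
  shows "(\<forall>\<beta> \<beta>1 \<beta>2. H2a m \<beta> \<beta>1 \<beta>2 \<longrightarrow> Osg m \<longrightarrow> \<beta> \<le> 1 \<and> \<beta>1 = 0 \<and> \<beta>2 = -1)
       \<and> (H2b m \<longrightarrow> \<not> Osg m)
       \<and> (H2c m \<longrightarrow> Osg m)"
proof (intro conjI allI impI)
  fix \<beta> \<beta>1 \<beta>2 assume H2a: "H2a m \<beta> \<beta>1 \<beta>2" and "Osg m"
  show "\<beta> \<le> 1"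
    using H2a_Osg_imp_beta_le_one[OF \<open>H1 n m\<close> H2a \<open>Osg m\<close>] .
  then show "\<beta>1 = 0"
    by (intro H2a_beta1_eq_0[OF H2a]) auto
  then show "\<beta>2 = -1"
    by (rule H2a_beta2_eq_minus_one[OF \<open>H1 n m\<close> H2a])
next
  show "H2b m \<Longrightarrow> \<not> Osg m"
    using H2b_imp_not_Osg[OF \<open>H1 n m\<close>] .
  show "H2c m \<Longrightarrow> Osg m"
    using H2c_imp_Osg[OF \<open>H1 n m\<close>] .
qed

end
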